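(* Let a group $G$ act on a real tree $T$ and let $g,h\in G$ be such that $\langle g,h\rangle$ acts irreducibly on $T$. Suppose that $g$ is either elliptic or equal to $g_0^m$ for some weakly $\lambda$-stable hyperbolic element $g_0$ and some integer $m\ge10\max\{\lambda,1\}$ (with $\lambda>0$), and make the same assumption on $h$. Then the pair $\{g,h\}$ is acylindrical.
   Context: For an isometry $g$: $tl(g)=\inf_p d(p,gp)$; elliptic means having a fixed point, hyperbolic otherwise; $A(g)$ is the fixed set or translation axis. $E(f)$: elements preserving $A(f)$ setwise. Hyperbolic $h$ is weakly $\lambda$-stable if for all $g\in G$, $|A(h)\cap gA(h)|>\lambda tl(h)$ implies $g\in E(h)$. An action is abelian if $tl(gh)\le tl(g)+tl(h)$ for all $g,h$; dihedral if not abelian but this inequality holds for all pairs of hyperbolic elements; irreducible if neither. A pair $g,h$ is acylindrical if $\langle g,h\rangle$ acts irreducibly on $T$, $|A(g)\cap A(h)|\le\frac12\max\{tl(g),tl(h)\}$, and each of $g,h$ that is hyperbolic is weakly $\frac13$-stable. *)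

theory Defs
  imports "HOL-Analysis.Analysis" "HOL-Algebra.Group_Action" "HOL-Algebra.Generated_Groups"
begin

definition real_tree :: "'a::metric_space set \<Rightarrow> bool" where
  "real_tree T \<longleftrightarrow> T \<noteq> {} \<and>
     (\<forall>x\<in>T. \<forall>y\<in>T. \<exists>\<gamma>::real \<Rightarrow> 'a.
        \<gamma> 0 = x \<and> \<gamma> (dist x y) = y \<and> \<gamma> ` {0..dist x y} \<subseteq> T \<and>
        (\<forall>s\<in>{0..dist x y}. \<forall>t\<in>{0..dist x y}. dist (\<gamma> s) (\<gamma> t) = \<bar>s - t\<bar>) \<and>
        (\<forall>c::real \<Rightarrow> 'a. arc c \<and> pathstart c = x \<and> pathfinish c = y \<and> path_image c \<subseteq> T
             \<longrightarrow> path_image c = \<gamma> ` {0..dist x y}))"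

definition isometric_action :: "('g, 'm) monoid_scheme \<Rightarrow> 'a::metric_space set \<Rightarrow> ('g \<Rightarrow> 'a \<Rightarrow> 'a) \<Rightarrow> bool" where
  "isometric_action G T \<phi> \<longleftrightarrow> group G \<and> group_action G T \<phi> \<and>
     (\<forall>g\<in>carrier G. \<forall>x\<in>T. \<forall>y\<in>T. dist (\<phi> g x) (\<phi> g y) = dist x y)"

definition trans_len :: "'a::metric_space set \<Rightarrow> ('g \<Rightarrow> 'a \<Rightarrow> 'a) \<Rightarrow> 'g \<Rightarrow> real" where
  "trans_len T \<phi> g = Inf ((\<lambda>p. dist p (\<phi> g p)) ` T)"

definition elliptic :: "'a::metric_space set \<Rightarrow> ('g \<Rightarrow> 'a \<Rightarrow> 'a) \<Rightarrow> 'g \<Rightarrow> bool" where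
  "elliptic T \<phi> g \<longleftrightarrow> (\<exists>p\<in>T. \<phi> g p = p)"

definition hyperbolic :: "'a::metric_space set \<Rightarrow> ('g \<Rightarrow> 'a \<Rightarrow> 'a) \<Rightarrow> 'g \<Rightarrow> bool" where
  "hyperbolic T \<phi> g \<longleftrightarrow> \<not> elliptic T \<phi> g"

text \<open>Characteristic set A(g): the fixed set of an elliptic element, resp. the translation
  axis of a hyperbolic element; in both cases it is the set of points moved by exactly tl(g).\<close>
definition char_set :: "'a::metric_space set \<Rightarrow> ('g \<Rightarrow> 'a \<Rightarrow> 'a) \<Rightarrow> 'g \<Rightarrow> 'a set" where
  "char_set T \<phi> g = {p\<in>T. dist p (\<phi> g p) = trans_len T \<phi> g}"

definition tree_length :: "'a::metric_space set \<Rightarrow> ereal" where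
  "tree_length S = (if S = {} then 0 else (SUP x\<in>S. SUP y\<in>S. ereal (dist x y)))"

definition stab_axis :: "('g, 'm) monoid_scheme \<Rightarrow> 'a::metric_space set \<Rightarrow> ('g \<Rightarrow> 'a \<Rightarrow> 'a) \<Rightarrow> 'g \<Rightarrow> 'g set" where
  "stab_axis G T \<phi> f = {g\<in>carrier G. \<phi> g ` char_set T \<phi> f = char_set T \<phi> f}"

definition weakly_stable :: "('g, 'm) monoid_scheme \<Rightarrow> 'a::metric_space set \<Rightarrow> ('g \<Rightarrow> 'a \<Rightarrow> 'a) \<Rightarrow> real \<Rightarrow> 'g \<Rightarrow> bool" where
  "weakly_stable G T \<phi> lam h \<longleftrightarrow> hyperbolic T \<phi> h \<and>
     (\<forall>g\<in>carrier G. tree_length (char_set T \<phi> h \<inter> \<phi> g ` char_set T \<phi> h) > ereal (lam * trans_len T \<phi> h)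
        \<longrightarrow> g \<in> stab_axis G T \<phi> h)"

definition abelian_on :: "('g, 'm) monoid_scheme \<Rightarrow> 'a::metric_space set \<Rightarrow> ('g \<Rightarrow> 'a \<Rightarrow> 'a) \<Rightarrow> 'g set \<Rightarrow> bool" where
  "abelian_on G T \<phi> H \<longleftrightarrow> (\<forall>g\<in>H. \<forall>h\<in>H.
      trans_len T \<phi> (g \<otimes>\<^bsub>G\<^esub> h) \<le> trans_len T \<phi> g + trans_len T \<phi> h)"

definition dihedral_on :: "('g, 'm) monoid_scheme \<Rightarrow> 'a::metric_space set \<Rightarrow> ('g \<Rightarrow> 'a \<Rightarrow> 'a) \<Rightarrow> 'g set \<Rightarrow> bool" where
  "dihedral_on G T \<phi> H \<longleftrightarrow> \<not> abelian_on G T \<phi> H \<and>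
     (\<forall>g\<in>H. \<forall>h\<in>H. hyperbolic T \<phi> g \<longrightarrow> hyperbolic T \<phi> h \<longrightarrow>
      trans_len T \<phi> (g \<otimes>\<^bsub>G\<^esub> h) \<le> trans_len T \<phi> g + trans_len T \<phi> h)"

definition irreducible_on :: "('g, 'm) monoid_scheme \<Rightarrow> 'a::metric_space set \<Rightarrow> ('g \<Rightarrow> 'a \<Rightarrow> 'a) \<Rightarrow> 'g set \<Rightarrow> bool" where
  "irreducible_on G T \<phi> H \<longleftrightarrow> \<not> abelian_on G T \<phi> H \<and> \<not> dihedral_on G T \<phi> H"

definition acylindrical_pair :: "('g, 'm) monoid_scheme \<Rightarrow> 'a::metric_space set \<Rightarrow> ('g \<Rightarrow> 'a \<Rightarrow> 'a) \<Rightarrow> 'g \<Rightarrow> 'g \<Rightarrow> bool" where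
  "acylindrical_pair G T \<phi> g h \<longleftrightarrow>
     irreducible_on G T \<phi> (generate G {g, h}) \<and>
     tree_length (char_set T \<phi> g \<inter> char_set T \<phi> h)
        \<le> ereal (max (trans_len T \<phi> g) (trans_len T \<phi> h) / 2) \<and>
     (hyperbolic T \<phi> g \<longrightarrow> weakly_stable G T \<phi> (1/3) g) \<and>
     (hyperbolic T \<phi> h \<longrightarrow> weakly_stable G T \<phi> (1/3) h)"

end

(* A hyperbolic element k translates a line, its axis, by tl(k), and k^m translates the same
   line by m tl(k); so weak 1/3-stability of g0^m follows from weak lam-stability of g0 once
   m >= 3 lam. If A(g) and A(h) overlapped in more than half the larger translation length, the
   other generator (or h0, after shifting the overlap along the axis of h) would map a piece of
   the axis of the weakly stable root, longer than lam times its translation length, into that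
   axis; hence it would preserve the axis and translate along it. Two elliptic generators would
   instead share a fixed point. Either way <g, h> would act abelianly, contradicting
   irreducibility. *)

theory Submission
  imports Defs
begin

definition dist_between :: "'a::metric_space \<Rightarrow> 'a \<Rightarrow> 'a \<Rightarrow> bool" where
  "dist_between x z y \<longleftrightarrow> dist x z + dist z y = dist x y"

lemma dist_between_commute: "dist_between x z y \<Longrightarrow> dist_between y z x"
  unfolding dist_between_def by (simp add: dist_commute add.commute)

lemma dist_between_start [simp]: "dist_between x x y"
  and dist_between_end [simp]: "dist_between x y y"
  unfolding dist_between_def by simp_all

lemma dist_between_shrink:
  assumes "dist_between a w b" "dist_between a q w"
  shows "dist_between a q b" "dist_between q w b"
  using assms dist_triangle[of q b w] dist_triangle[of a b q] dist_triangle[of w b q]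
  unfolding dist_between_def by (simp_all add: dist_commute)

lemma dist_between_extend:
  assumes "dist_between a p b" "dist_between a b z"
  shows "dist_between p b z" "dist_between a p z"
  using assms dist_triangle[of a z p] dist_triangle[of p z b]
  unfolding dist_between_def by linarith+

lemma dist_between_split:
  assumes "dist_between a b e" "dist_between b z e"
  shows "dist_between a b z" "dist_between a z e"
  using assms dist_triangle[of a z b] dist_triangle[of a e z]
  unfolding dist_between_def by linarith+

lemma dist_between_no_shortcut:
  assumes "dist_between x w z" "dist_between x u w" "dist_between w u z"
  shows "u = w"
proof -
  have "dist u w \<le> 0"
    using assms dist_triangle[of x z u] dist_commute[of w u] unfolding dist_between_def by linarith
  then show ?thesis by simp
qed

section \<open>Geodesics in real trees\<close>

definition tree_geodesic :: "'a::metric_space set \<Rightarrow> 'a \<Rightarrow> 'a \<Rightarrow> (real \<Rightarrow> 'a) \<Rightarrow> bool" where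
  "tree_geodesic T x y \<gamma> \<longleftrightarrow> \<gamma> 0 = x \<and> \<gamma> (dist x y) = y \<and> \<gamma> ` {0..dist x y} \<subseteq> T \<and>
     (\<forall>s\<in>{0..dist x y}. \<forall>t\<in>{0..dist x y}. dist (\<gamma> s) (\<gamma> t) = \<bar>s - t\<bar>) \<and>
     (\<forall>c::real \<Rightarrow> 'a. arc c \<and> pathstart c = x \<and> pathfinish c = y \<and> path_image c \<subseteq> T
        \<longrightarrow> path_image c = \<gamma> ` {0..dist x y})"

locale R_tree =
  fixes T :: "'a::metric_space set"
  assumes real_tree: "real_tree T"
begin

lemma nonempty: "T \<noteq> {}"
  using real_tree unfolding real_tree_def by simp

definition geod :: "'a \<Rightarrow> 'a \<Rightarrow> real \<Rightarrow> 'a" where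
  "geod x y = (SOME \<gamma>. tree_geodesic T x y \<gamma>)"

lemma tree_geodesic_geod:
  assumes "x \<in> T" "y \<in> T"
  shows "tree_geodesic T x y (geod x y)"
proof -
  have "\<exists>\<gamma>. tree_geodesic T x y \<gamma>"
    using real_tree assms unfolding real_tree_def tree_geodesic_def by blast
  then show ?thesis unfolding geod_def by (rule someI_ex)
qed

lemma
  assumes "x \<in> T" "y \<in> T"
  shows geod_start: "geod x y 0 = x"
    and geod_end: "geod x y (dist x y) = y"
    and geod_in_T: "s \<in> {0..dist x y} \<Longrightarrow> geod x y s \<in> T"
    and dist_geod: "s \<in> {0..dist x y} \<Longrightarrow> t \<in> {0..dist x y} \<Longrightarrow> dist (geod x y s) (geod x y t) = \<bar>s - t\<bar>"
    and arc_image_eq_geod: "arc c \<Longrightarrow> pathstart c = x \<Longrightarrow> pathfinish c = y \<Longrightarrow> path_image c \<subseteq> T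
             \<Longrightarrow> path_image c = geod x y ` {0..dist x y}"
  using tree_geodesic_geod[OF assms] unfolding tree_geodesic_def by blast+

lemma geod_point:
  assumes "x \<in> T" "y \<in> T" "0 \<le> s" "s \<le> dist x y"
  shows "geod x y s \<in> T" "dist x (geod x y s) = s" "dist (geod x y s) y = dist x y - s"
    "dist_between x (geod x y s) y"
proof -
  have s: "s \<in> {0..dist x y}" and ends: "0 \<in> {0..dist x y}" "dist x y \<in> {0..dist x y}"
    using assms by auto
  show "geod x y s \<in> T" using geod_in_T[OF assms(1,2) s] .
  show x: "dist x (geod x y s) = s"
    using dist_geod[OF assms(1,2) ends(1) s] geod_start[OF assms(1,2)] assms by simp
  show y: "dist (geod x y s) y = dist x y - s"
    using dist_geod[OF assms(1,2) s ends(2)] geod_end[OF assms(1,2)] assms by simp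
  show "dist_between x (geod x y s) y" using x y unfolding dist_between_def by simp
qed

lemma geod_image_between:
  assumes "x \<in> T" "y \<in> T" "u \<in> geod x y ` {0..dist x y}"
  shows "dist_between x u y" "u \<in> T"
  using assms geod_point[OF assms(1,2)] by auto

lemma continuous_on_geod:
  assumes "x \<in> T" "y \<in> T"
  shows "continuous_on {0..dist x y} (geod x y)"
  unfolding continuous_on_iff
proof (intro ballI allI impI)
  fix s e assume "s \<in> {0..dist x y}" "(e::real) > 0"
  then show "\<exists>d>0. \<forall>t\<in>{0..dist x y}. dist t s < d \<longrightarrow> dist (geod x y t) (geod x y s) < e"
    using dist_geod[OF assms] by (intro exI[of _ e]) (auto simp: dist_real_def)
qed

definition geod_path :: "'a \<Rightarrow> 'a \<Rightarrow> real \<Rightarrow> 'a" where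
  "geod_path x y = (\<lambda>t. geod x y (t * dist x y))"

lemma
  assumes "x \<in> T" "y \<in> T" "x \<noteq> y"
  shows arc_geod_path: "arc (geod_path x y)"
    and pathstart_geod_path: "pathstart (geod_path x y) = x"
    and pathfinish_geod_path: "pathfinish (geod_path x y) = y"
    and path_image_geod_path: "path_image (geod_path x y) = geod x y ` {0..dist x y}"
proof -
  let ?d = "dist x y"
  have d: "?d > 0" using assms by simp
  have scale: "(\<lambda>t. t * ?d) ` {0..1} = {0..?d}"
    using d by (simp add: image_mult_atLeastAtMost_if')
  show "path_image (geod_path x y) = geod x y ` {0..?d}"
    unfolding path_image_def geod_path_def using scale by (metis image_image)
  show "pathstart (geod_path x y) = x" "pathfinish (geod_path x y) = y"
    unfolding pathstart_def pathfinish_def geod_path_def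
    using geod_start[OF assms(1,2)] geod_end[OF assms(1,2)] by simp_all
  have "continuous_on {0..1} (geod x y \<circ> (\<lambda>t. t * ?d))"
    by (rule continuous_on_compose) (use continuous_on_geod[OF assms(1,2)] scale in \<open>auto intro!: continuous_intros\<close>)
  then have "path (geod_path x y)" unfolding path_def geod_path_def by (simp add: o_def)
  moreover have "inj_on (geod_path x y) {0..1}"
  proof (rule inj_onI)
    fix s t assume st: "s \<in> {0..1}" "t \<in> {0..1}" "geod_path x y s = geod_path x y t"
    have "s * ?d \<in> {0..?d}" "t * ?d \<in> {0..?d}" using st(1,2) scale by blast+
    then have "\<bar>s * ?d - t * ?d\<bar> = 0"
      using dist_geod[OF assms(1,2)] st(3) unfolding geod_path_def by (metis dist_self)
    then show "s = t" using d by simp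
  qed
  ultimately show "arc (geod_path x y)" unfolding arc_def by simp
qed

text \<open>Uniqueness of arcs: if the geodesics [x,w] and [w,z] meet only in w, their
  concatenation is an arc, hence it is the geodesic [x,z].\<close>

lemma no_shortcut_in_geod_image:
  assumes "x \<in> T" "w \<in> T" "z \<in> T" "w \<noteq> x" "w \<noteq> z"
    and no_shortcut: "\<And>u. dist_between x u w \<Longrightarrow> dist_between w u z \<Longrightarrow> u \<in> T \<Longrightarrow> u = w"
  shows "w \<in> geod x z ` {0..dist x z}"
proof -
  let ?p = "geod_path x w" and ?q = "geod_path w z"
  note p = arc_geod_path[OF assms(1,2)] pathstart_geod_path[OF assms(1,2)]
    pathfinish_geod_path[OF assms(1,2)] path_image_geod_path[OF assms(1,2)]
  note q = arc_geod_path[OF assms(2,3,5)] pathstart_geod_path[OF assms(2,3,5)]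
    pathfinish_geod_path[OF assms(2,3,5)] path_image_geod_path[OF assms(2,3,5)]
  have ends: "pathfinish ?p = pathstart ?q" using p q assms(4) by simp
  have "path_image ?p \<inter> path_image ?q \<subseteq> {pathstart ?q}"
  proof
    fix u assume u: "u \<in> path_image ?p \<inter> path_image ?q"
    have "dist_between x u w" "u \<in> T" "dist_between w u z"
      using geod_image_between[OF assms(1,2)] geod_image_between[OF assms(2,3)] u p(4) q(4) assms(4)
      by auto
    then show "u \<in> {pathstart ?q}" using no_shortcut q(2) assms(5) by simp
  qed
  then have "arc (?p +++ ?q)" using arc_join p(1) q(1) ends assms(4,5) by auto
  moreover have "path_image (?p +++ ?q) = path_image ?p \<union> path_image ?q"
    using path_image_join[OF ends] .
  moreover have "path_image ?p \<subseteq> T" "path_image ?q \<subseteq> T"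
    using geod_image_between(2)[OF assms(1,2)] geod_image_between(2)[OF assms(2,3)] p(4) q(4) assms(4,5)
    by auto
  ultimately have "path_image (?p +++ ?q) = geod x z ` {0..dist x z}"
    using arc_image_eq_geod[OF assms(1,3)] p q assms(4,5) by simp
  moreover have "w \<in> path_image (?p +++ ?q)"
    using pathfinish_in_path_image[of ?p] p(3) q(2) ends assms(4) by (auto simp: path_image_join[OF ends])
  ultimately show ?thesis by simp
qed

lemma no_shortcut_imp_between:
  assumes "x \<in> T" "w \<in> T" "z \<in> T"
    and "\<And>u. dist_between x u w \<Longrightarrow> dist_between w u z \<Longrightarrow> u \<in> T \<Longrightarrow> u = w"
  shows "dist_between x w z"
proof (cases "w = x \<or> w = z")
  case False
  then show ?thesis
    using no_shortcut_in_geod_image[OF assms(1-3)] geod_image_between(1)[OF assms(1,3)] assms(4) by blast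
qed auto

lemma between_imp_eq_geod:
  assumes "x \<in> T" "w \<in> T" "z \<in> T" "dist_between x w z"
  shows "w = geod x z (dist x w)"
proof (cases "w = x \<or> w = z")
  case True
  then show ?thesis using geod_start[OF assms(1,3)] geod_end[OF assms(1,3)] by auto
next
  case False
  then have "w \<in> geod x z ` {0..dist x z}"
    using no_shortcut_in_geod_image[OF assms(1-3)] dist_between_no_shortcut[OF assms(4)] by blast
  then obtain t where t: "t \<in> {0..dist x z}" "w = geod x z t" by auto
  then have "dist x w = t" using geod_point[OF assms(1,3)] by auto
  then show ?thesis using t by simp
qed

lemma between_unique:
  assumes "x \<in> T" "y \<in> T" "z1 \<in> T" "z2 \<in> T"
    and "dist_between x z1 y" "dist_between x z2 y" "dist x z1 = dist x z2"
  shows "z1 = z2"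
  using between_imp_eq_geod[OF assms(1,3,2,5)] between_imp_eq_geod[OF assms(1,4,2,6)] assms(7) by simp

lemma between_at_dist:
  assumes "x \<in> T" "y \<in> T" "0 \<le> s" "s \<le> dist x y"
  obtains z where "z \<in> T" "dist_between x z y" "dist x z = s"
  using geod_point[OF assms] by blast

text \<open>The tripod point is found as the last point at which the geodesics from y to x and
  from y to z agree.\<close>

lemma tripod:
  assumes "x \<in> T" "y \<in> T" "z \<in> T"
  obtains w where "w \<in> T" "dist_between x w y" "dist_between y w z" "dist_between x w z"
proof -
  define m where "m = min (dist y x) (dist y z)"
  define E where "E = {t \<in> {0..m}. dist (geod y x t) (geod y z t) = 0}"
  have "continuous_on {0..m} (geod y x)" "continuous_on {0..m} (geod y z)"
    by (rule continuous_on_subset[OF continuous_on_geod]; use assms in \<open>auto simp: m_def\<close>)+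
  then have "continuous_on {0..m} (\<lambda>t. dist (geod y x t) (geod y z t))"
    by (rule continuous_on_dist)
  then have "closed E" unfolding E_def
    by (rule continuous_closed_preimage_constant) simp
  moreover have "0 \<in> E"
    unfolding E_def m_def using geod_start[OF assms(2,1)] geod_start[OF assms(2,3)] by simp
  moreover have bdd: "bdd_above E" unfolding E_def by (rule bdd_aboveI[of _ m]) auto
  ultimately have "Sup E \<in> E" using closed_contains_Sup by blast
  then have t: "0 \<le> Sup E" "Sup E \<le> dist y x" "Sup E \<le> dist y z" "geod y x (Sup E) = geod y z (Sup E)"
    unfolding E_def m_def by auto
  define w where "w = geod y x (Sup E)"
  have wx: "w \<in> T" "dist y w = Sup E" "dist_between y w x"
    using geod_point[OF assms(2,1) t(1,2)] unfolding w_def by auto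
  have wz: "dist_between y w z"
    using geod_point[OF assms(2,3) t(1,3)] t(4) unfolding w_def by auto
  have "dist_between x w z"
  proof (rule no_shortcut_imp_between[OF assms(1) wx(1) assms(3)])
    fix u assume u: "dist_between x u w" "dist_between w u z" "u \<in> T"
    have ux: "dist_between y u x" "dist y u = dist y w + dist w u"
      using dist_between_split[OF wx(3) dist_between_commute[OF u(1)]] unfolding dist_between_def by auto
    have uz: "dist_between y u z"
      using dist_between_split(2)[OF wz u(2)] .
    have "dist y u \<le> dist y x" "dist y u \<le> dist y z"
      using ux(1) uz unfolding dist_between_def by (smt (verit) zero_le_dist)+
    moreover have "u = geod y x (dist y u)" "u = geod y z (dist y u)"
      using between_imp_eq_geod[OF assms(2) u(3) assms(1) ux(1)]
        between_imp_eq_geod[OF assms(2) u(3) assms(3) uz] .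
    ultimately have "dist y u \<in> E" unfolding E_def m_def by auto
    then have "dist y u \<le> Sup E" using bdd by (rule cSup_upper)
    then show "u = w" using ux(2) wx(2) by simp
  qed
  then show ?thesis using that wx wz dist_between_commute by blast
qed

lemma between_glue:
  assumes T: "a \<in> T" "b \<in> T" "c \<in> T" "d \<in> T"
    and abc: "dist_between a b c" and bcd: "dist_between b c d" and "b \<noteq> c"
  shows "dist_between a c d"
proof -
  obtain w where w: "w \<in> T" "dist_between a w c" "dist_between c w d" "dist_between a w d"
    using tripod[OF T(1,3,4)] by blast
  have "w = c"
  proof (rule ccontr)
    assume "w \<noteq> c"
    define r where "r = min (dist c w) (dist c b)"
    have r: "r > 0" using \<open>w \<noteq> c\<close> \<open>b \<noteq> c\<close> unfolding r_def by simp
    obtain u where u: "u \<in> T" "dist_between c u w" "dist c u = r"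
      using between_at_dist[OF T(3) w(1), of r] r unfolding r_def by auto
    obtain u' where u': "u' \<in> T" "dist_between c u' b" "dist c u' = r"
      using between_at_dist[OF T(3) T(2), of r] r unfolding r_def by auto
    have "u = u'"
      using between_unique[OF T(3) T(1) u(1) u'(1)] u(3) u'(3)
        dist_between_shrink(1)[OF dist_between_commute[OF w(2)] u(2)]
        dist_between_shrink(1)[OF dist_between_commute[OF abc] u'(2)] by simp
    then have "dist_between u c d"
      using dist_between_extend(1)[OF dist_between_commute[OF u'(2)] bcd] by simp
    moreover have "dist_between c u d" using dist_between_shrink(1)[OF w(3) u(2)] .
    ultimately show False using u(3) r unfolding dist_between_def by (simp add: dist_commute)
  qed
  then show ?thesis using w(4) by simp
qed

lemma between_ordered:
  assumes T: "a \<in> T" "b \<in> T" "z1 \<in> T" "z2 \<in> T"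
    and "dist_between a z1 b" "dist_between a z2 b" "dist a z1 \<le> dist a z2"
  shows "dist_between a z1 z2"
proof -
  obtain z where z: "z \<in> T" "dist_between a z z2" "dist a z = dist a z1"
    using between_at_dist[OF T(1) T(4), of "dist a z1"] assms(7) by auto
  have "z = z1"
    using between_unique[OF T(1,2) z(1) T(3) dist_between_shrink(1)[OF assms(6) z(2)] assms(5)] z(3) .
  then show ?thesis using z(2) by simp
qed

end

locale tree_action = R_tree T for T :: "'a::metric_space set" +
  fixes G :: "('g, 'm) monoid_scheme" (structure) and \<phi> :: "'g \<Rightarrow> 'a \<Rightarrow> 'a"
  assumes isometric_action: "isometric_action G T \<phi>"
begin

sublocale group G
  using isometric_action unfolding isometric_action_def by simp

lemma group_action: "group_action G T \<phi>"
  using isometric_action unfolding isometric_action_def by simp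

lemma act_in_T: "k \<in> carrier G \<Longrightarrow> x \<in> T \<Longrightarrow> \<phi> k x \<in> T"
  using group_action.element_image[OF group_action] by blast

lemma act_dist: "k \<in> carrier G \<Longrightarrow> x \<in> T \<Longrightarrow> y \<in> T \<Longrightarrow> dist (\<phi> k x) (\<phi> k y) = dist x y"
  using isometric_action unfolding isometric_action_def by blast

lemma act_mult: "a \<in> carrier G \<Longrightarrow> b \<in> carrier G \<Longrightarrow> x \<in> T \<Longrightarrow> \<phi> (a \<otimes> b) x = \<phi> a (\<phi> b x)"
  using group_action.composition_rule[OF group_action] by blast

lemma act_one: "x \<in> T \<Longrightarrow> \<phi> \<one> x = x"
  using group_action.id_eq_one[OF group_action] by (metis restrict_apply')

lemma act_inv_act: "k \<in> carrier G \<Longrightarrow> x \<in> T \<Longrightarrow> \<phi> (inv k) (\<phi> k x) = x"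
  using act_mult[of "inv k" k x] act_one by simp

lemma act_pow_Suc: "k \<in> carrier G \<Longrightarrow> x \<in> T \<Longrightarrow> \<phi> (k [^] Suc n) x = \<phi> (k [^] n) (\<phi> k x)"
  using act_mult[of "k [^] n" k x] by simp

lemma dist_between_act:
  "k \<in> carrier G \<Longrightarrow> x \<in> T \<Longrightarrow> y \<in> T \<Longrightarrow> z \<in> T \<Longrightarrow> dist_between x z y
    \<Longrightarrow> dist_between (\<phi> k x) (\<phi> k z) (\<phi> k y)"
  unfolding dist_between_def using act_dist by simp

lemma trans_len_le: "p \<in> T \<Longrightarrow> trans_len T \<phi> k \<le> dist p (\<phi> k p)"
  unfolding trans_len_def by (rule cInf_lower) (auto intro: bdd_belowI[of _ 0])

lemma trans_len_ge: "(\<And>p. p \<in> T \<Longrightarrow> a \<le> dist p (\<phi> k p)) \<Longrightarrow> a \<le> trans_len T \<phi> k"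
  unfolding trans_len_def using nonempty by (intro cInf_greatest) auto

lemma trans_len_eqI:
  "p \<in> T \<Longrightarrow> dist p (\<phi> k p) = a \<Longrightarrow> (\<And>q. q \<in> T \<Longrightarrow> a \<le> dist q (\<phi> k q)) \<Longrightarrow> trans_len T \<phi> k = a"
  using trans_len_le[of p k] trans_len_ge[of a k] by fastforce

lemma trans_len_elliptic: "elliptic T \<phi> k \<Longrightarrow> trans_len T \<phi> k = 0"
  unfolding elliptic_def by (auto intro: trans_len_eqI)

lemma char_set_elliptic: "elliptic T \<phi> k \<Longrightarrow> char_set T \<phi> k = {p\<in>T. \<phi> k p = p}"
  unfolding char_set_def using trans_len_elliptic by auto

lemma dist_pow_le: "k \<in> carrier G \<Longrightarrow> p \<in> T \<Longrightarrow> dist p (\<phi> (k [^] N) p) \<le> real N * dist p (\<phi> k p)"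
proof (induction N)
  case 0
  then show ?case using act_one by simp
next
  case (Suc N)
  have "dist (\<phi> (k [^] N) p) (\<phi> (k [^] Suc N) p) = dist p (\<phi> k p)"
    using act_pow_Suc[OF Suc.prems] act_dist[of "k [^] N" p "\<phi> k p"] act_in_T Suc.prems by simp
  then show ?case
    using Suc dist_triangle[of p "\<phi> (k [^] Suc N) p" "\<phi> (k [^] N) p"] by (simp add: algebra_simps)
qed

text \<open>The orbits of p and q stay at distance d(p, q) from each other, so they cannot escape at
  different linear rates.\<close>

lemma displacement_ge_escape_rate:
  assumes k: "k \<in> carrier G" and p: "p \<in> T" and q: "q \<in> T"
    and escape: "\<And>N::nat. real N * a \<le> dist q (\<phi> (k [^] N) q)"
  shows "a \<le> dist p (\<phi> k p)"
proof (rule ccontr)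
  define D where "D = dist p (\<phi> k p)"
  assume "\<not> a \<le> dist p (\<phi> k p)"
  then have pos: "a - D > 0" unfolding D_def by simp
  obtain N :: nat where N: "2 * dist p q / (a - D) < real N" using reals_Archimedean2 by blast
  have kN: "k [^] N \<in> carrier G" using k by simp
  have "real N * a \<le> dist q p + dist p (\<phi> (k [^] N) p) + dist (\<phi> (k [^] N) p) (\<phi> (k [^] N) q)"
    using escape[of N] dist_triangle[of q "\<phi> (k [^] N) q" p]
      dist_triangle[of p "\<phi> (k [^] N) q" "\<phi> (k [^] N) p"] by linarith
  also have "\<dots> \<le> 2 * dist p q + real N * D"
    using act_dist[OF kN p q] dist_pow_le[OF k p, of N] by (simp add: D_def dist_commute)
  finally have "real N * (a - D) \<le> 2 * dist p q" by (simp add: algebra_simps)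
  moreover have "2 * dist p q < real N * (a - D)" using N pos by (simp add: divide_less_eq)
  ultimately show False by simp
qed

section \<open>Hyperbolic elements\<close>

lemma orbit_tripod:
  assumes k: "k \<in> carrier G" and x: "x \<in> T"
  obtains w where "w \<in> T" "dist_between (\<phi> k x) w x" "dist_between x w (\<phi> k (\<phi> k x))"
    "dist_between (\<phi> k x) w (\<phi> k (\<phi> k x))"
    "dist x (\<phi> k (\<phi> k x)) = 2 * (dist x (\<phi> k x) - dist (\<phi> k x) w)"
proof -
  have x1: "\<phi> k x \<in> T" and x2: "\<phi> k (\<phi> k x) \<in> T" using act_in_T k x by auto
  obtain w where w: "w \<in> T" "dist_between (\<phi> k x) w x" "dist_between x w (\<phi> k (\<phi> k x))"
    "dist_between (\<phi> k x) w (\<phi> k (\<phi> k x))"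
    using tripod[OF x1 x x2] by blast
  moreover have "dist (\<phi> k x) (\<phi> k (\<phi> k x)) = dist x (\<phi> k x)" using act_dist[OF k x x1] .
  ultimately have "dist x (\<phi> k (\<phi> k x)) = 2 * (dist x (\<phi> k x) - dist (\<phi> k x) w)"
    using dist_commute[of x w] dist_commute[of x "\<phi> k x"] unfolding dist_between_def by argo
  then show ?thesis using that w by blast
qed

lemma hyperbolic_dist_lt_dist_square:
  assumes k: "k \<in> carrier G" and hyp: "hyperbolic T \<phi> k" and x: "x \<in> T"
  shows "dist x (\<phi> k x) < dist x (\<phi> k (\<phi> k x))"
proof (rule ccontr)
  define x1 x2 D where "x1 = \<phi> k x" and "x2 = \<phi> k x1" and "D = dist x x1"
  have x1: "x1 \<in> T" and x2: "x2 \<in> T" unfolding x1_def x2_def using act_in_T k x by auto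
  obtain w where w: "w \<in> T" "dist_between x1 w x" "dist_between x w x2" "dist_between x1 w x2"
    "dist x x2 = 2 * (D - dist x1 w)"
    using orbit_tripod[OF k x] unfolding x1_def x2_def D_def .
  assume "\<not> dist x (\<phi> k x) < dist x (\<phi> k (\<phi> k x))"
  then have far: "D / 2 \<le> dist x1 w" using w(5) unfolding x1_def x2_def D_def by simp
  text \<open>The midpoint q of [x, k x] is fixed: q and k q both lie on [k x, w] at distance D/2 from k x.\<close>
  have "0 \<le> D / 2" "D / 2 \<le> dist x x1" unfolding D_def by simp_all
  then obtain q where q: "q \<in> T" "dist_between x q x1" "dist x q = D / 2"
    using between_at_dist[OF x x1] by blast
  have kq: "\<phi> k q \<in> T" "dist_between x1 (\<phi> k q) x2" "dist x1 (\<phi> k q) = D / 2"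
    using act_in_T[OF k q(1)] dist_between_act[OF k x x1 q(1) q(2)] act_dist[OF k x q(1)] q(3)
    unfolding x2_def x1_def by simp_all
  obtain q' where q': "q' \<in> T" "dist_between x1 q' w" "dist x1 q' = D / 2"
    using between_at_dist[OF x1 w(1) \<open>0 \<le> D / 2\<close> far] by blast
  have "dist x1 q = D / 2"
    using q(2,3) dist_commute[of q x1] unfolding dist_between_def D_def by argo
  then have "q' = q"
    using between_unique[OF x1 x q'(1) q(1) dist_between_shrink(1)[OF w(2) q'(2)]
        dist_between_commute[OF q(2)]] q'(3) by simp
  moreover have "q' = \<phi> k q"
    using between_unique[OF x1 x2 q'(1) kq(1) dist_between_shrink(1)[OF w(4) q'(2)] kq(2)] kq(3) q'(3)
    by simp
  ultimately show False using hyp q(1) unfolding hyperbolic_def elliptic_def by metis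
qed

lemma hyperbolic_aligned_point:
  assumes k: "k \<in> carrier G" and hyp: "hyperbolic T \<phi> k"
  obtains y where "y \<in> T" "dist y (\<phi> k (\<phi> k y)) = 2 * dist y (\<phi> k y)" "0 < dist y (\<phi> k y)"
proof -
  obtain x where x: "x \<in> T" using nonempty by blast
  define x1 x2 D where "x1 = \<phi> k x" and "x2 = \<phi> k x1" and "D = dist x x1"
  have x1: "x1 \<in> T" and x2: "x2 \<in> T" unfolding x1_def x2_def using act_in_T k x by auto
  have d12: "dist x1 x2 = D" unfolding D_def x2_def x1_def using act_dist[OF k x act_in_T[OF k x]] .
  obtain w where w: "w \<in> T" "dist_between x1 w x" "dist_between x w x2" "dist_between x1 w x2"
    "dist x x2 = 2 * (D - dist x1 w)"
    using orbit_tripod[OF k x] unfolding x1_def x2_def D_def .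
  define \<delta> where "\<delta> = dist x1 w"
  have near: "2 * \<delta> < D"
    using hyperbolic_dist_lt_dist_square[OF k hyp x] w(5) unfolding x1_def x2_def D_def \<delta>_def by simp
  have dxw: "dist x w = D - \<delta>"
    using w(2) dist_commute[of x w] dist_commute[of x x1] unfolding dist_between_def \<delta>_def D_def by argo
  text \<open>The point p of [x, k x] at distance \<delta> from x is mapped to the tripod point w,
    and p, w, k w, k (k p) are aligned at spacing D - 2 \<delta>.\<close>
  have "0 \<le> \<delta>" "\<delta> \<le> dist x x1" using near zero_le_dist[of x1 w] unfolding \<delta>_def D_def by linarith+
  then obtain p where p: "p \<in> T" "dist_between x p x1" "dist x p = \<delta>"
    using between_at_dist[OF x x1] by blast
  have "dist_between x1 (\<phi> k p) x2" "dist x1 (\<phi> k p) = \<delta>"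
    using dist_between_act[OF k x x1 p(1) p(2)] act_dist[OF k x p(1)] p(3) unfolding x2_def x1_def by simp_all
  then have kp: "\<phi> k p = w"
    using between_unique[OF x1 x2 act_in_T[OF k p(1)] w(1) _ w(4)] unfolding \<delta>_def by simp
  have pw: "dist_between x p w" "dist p w = D - 2 * \<delta>"
    using between_ordered[OF x x1 p(1) w(1) p(2) dist_between_commute[OF w(2)]] p(3) dxw near
    unfolding dist_between_def by simp_all
  have kw: "dist_between x1 (\<phi> k w) x2" "dist x1 (\<phi> k w) = D - \<delta>"
    using dist_between_act[OF k x x1 w(1) dist_between_commute[OF w(2)]] act_dist[OF k x w(1)] dxw
    unfolding x2_def x1_def by simp_all
  have wkw: "dist_between x1 w (\<phi> k w)" "dist w (\<phi> k w) = D - 2 * \<delta>"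
    using between_ordered[OF x1 x2 w(1) act_in_T[OF k w(1)] w(4) kw(1)] kw(2) near
    unfolding \<delta>_def dist_between_def by simp_all
  have "dist (\<phi> k w) x2 = \<delta>" using kw d12 unfolding dist_between_def by simp
  then have "dist_between w (\<phi> k w) x2" using wkw(2) w(4) d12 unfolding dist_between_def \<delta>_def by simp
  then have "dist_between p w (\<phi> k w)"
    using dist_between_extend(1)[OF pw(1) dist_between_split(1)[OF w(3)]] by blast
  then have "dist p (\<phi> k (\<phi> k p)) = 2 * dist p (\<phi> k p)" "0 < dist p (\<phi> k p)"
    using pw(2) wkw(2) kp near unfolding dist_between_def by simp_all
  then show ?thesis using that p(1) by blast
qed

lemma dist_pow_aligned:
  assumes k: "k \<in> carrier G" and y: "y \<in> T" and \<tau>: "dist y (\<phi> k y) = \<tau>" "0 < \<tau>"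
    and aligned: "dist y (\<phi> k (\<phi> k y)) = 2 * \<tau>"
  shows "dist y (\<phi> (k [^] n) y) = real n * \<tau>"
proof -
  have ky: "\<phi> k y \<in> T" and kky: "\<phi> k (\<phi> k y) \<in> T" using act_in_T k y by auto
  have step: "dist_between y (\<phi> k y) (\<phi> k (\<phi> k y))"
    unfolding dist_between_def using \<tau> aligned act_dist[OF k y ky] by simp
  have "dist y (\<phi> (k [^] n) y) = real n * \<tau> \<and> dist y (\<phi> (k [^] Suc n) y) = real (Suc n) * \<tau>"
  proof (induction n)
    case 0
    then show ?case using \<tau> act_one[OF y] act_pow_Suc[OF k y, of 0] act_one[OF ky] by simp
  next
    case (Suc n)
    have kn: "k [^] n \<in> carrier G" using k by simp
    define a b c where "a = \<phi> (k [^] n) y" and "b = \<phi> (k [^] Suc n) y" and "c = \<phi> (k [^] Suc (Suc n)) y"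
    have b: "b = \<phi> (k [^] n) (\<phi> k y)" unfolding b_def using act_pow_Suc[OF k y] .
    have c: "c = \<phi> (k [^] n) (\<phi> k (\<phi> k y))"
      unfolding c_def using act_pow_Suc[OF k y, of "Suc n"] act_pow_Suc[OF k ky, of n] by simp
    have T: "a \<in> T" "b \<in> T" "c \<in> T" unfolding a_def b c using act_in_T[OF kn] y ky kky by auto
    have ab: "dist a b = \<tau>" unfolding a_def b using act_dist[OF kn y ky] \<tau>(1) by simp
    have "dist_between y a b" using Suc.IH ab unfolding dist_between_def a_def b_def by (simp add: algebra_simps)
    moreover have "dist_between a b c"
      unfolding a_def b c using dist_between_act[OF kn y kky ky] step by simp
    moreover have "a \<noteq> b" using ab \<tau>(2) by auto
    ultimately have "dist_between y b c" using between_glue[OF y T] by simp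
    moreover have "dist b c = \<tau>" unfolding b c using act_dist[OF kn ky kky] act_dist[OF k y ky] \<tau>(1) by simp
    ultimately have "dist y c = real (Suc n) * \<tau> + \<tau>" using Suc.IH unfolding dist_between_def b_def by simp
    then show ?case using Suc.IH unfolding c_def by (simp add: algebra_simps)
  qed
  then show ?thesis by simp
qed

end

section \<open>Lines and translations\<close>

context R_tree
begin

definition tree_line :: "(real \<Rightarrow> 'a) \<Rightarrow> bool" where
  "tree_line c \<longleftrightarrow> (\<forall>s. c s \<in> T) \<and> (\<forall>s t. dist (c s) (c t) = \<bar>s - t\<bar>)"

lemma tree_line_in_T: "tree_line c \<Longrightarrow> c s \<in> T"
  and dist_tree_line: "tree_line c \<Longrightarrow> dist (c s) (c t) = \<bar>s - t\<bar>"
  unfolding tree_line_def by simp_all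

lemma tree_line_eq_iff: "tree_line c \<Longrightarrow> c s = c t \<longleftrightarrow> s = t"
  using dist_tree_line[of c s t] by auto

lemma tree_line_between: "tree_line c \<Longrightarrow> r \<le> s \<Longrightarrow> s \<le> u \<Longrightarrow> dist_between (c r) (c s) (c u)"
  unfolding dist_between_def by (simp add: dist_tree_line)

lemma between_tree_line_in_range:
  assumes c: "tree_line c" and z: "z \<in> T" and "dist_between (c a) z (c b)"
  shows "z \<in> range c"
proof -
  have "z \<in> range c" if ab: "a \<le> b" and between: "dist_between (c a) z (c b)" for a b
  proof -
    define r where "r = dist (c a) z"
    have "dist (c a) (c b) = b - a" using dist_tree_line[OF c, of a b] ab by simp
    then have r: "0 \<le> r" "r \<le> b - a"
      using between zero_le_dist[of "c a" z] zero_le_dist[of z "c b"]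
      unfolding dist_between_def r_def by linarith+
    then have "c (a + r) = z"
      using between_unique[OF tree_line_in_T[OF c] tree_line_in_T[OF c] tree_line_in_T[OF c] z
          tree_line_between[OF c, of a "a + r" b] between]
      by (simp add: dist_tree_line[OF c] r_def)
    then show ?thesis by (metis rangeI)
  qed
  then show ?thesis using assms(3) dist_between_commute[OF assms(3)] le_cases[of a b] by metis
qed

lemma tree_line_projection:
  assumes c: "tree_line c" and x: "x \<in> T" and L: "dist x (c 0) \<le> L"
  obtains s where "\<bar>s\<bar> \<le> dist x (c 0)" "dist_between x (c s) (c (-L))" "dist_between x (c s) (c L)"
proof -
  obtain w where w: "w \<in> T" "dist_between x w (c (-L))" "dist_between (c (-L)) w (c L)"
    "dist_between x w (c L)"
    using tripod[OF x tree_line_in_T[OF c] tree_line_in_T[OF c]] by blast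
  obtain s where s: "w = c s" using between_tree_line_in_range[OF c w(1) w(3)] by blast
  have "\<bar>-L - s\<bar> + \<bar>s - L\<bar> = 2 * L"
    using w(3) L zero_le_dist[of x "c 0"] unfolding s dist_between_def by (simp add: dist_tree_line[OF c])
  then have sL: "dist (c (-L)) w = L + s" "dist w (c L) = L - s"
    unfolding s by (simp_all add: dist_tree_line[OF c] abs_if split: if_splits)
  have "dist x (c (-L)) \<le> dist x (c 0) + L" "dist x (c L) \<le> dist x (c 0) + L"
    "L \<le> dist x (c 0) + dist x (c (-L))" "L \<le> dist x (c 0) + dist x (c L)"
    using dist_triangle[of x "c (-L)" "c 0"] dist_triangle[of x "c L" "c 0"]
      dist_triangle[of "c 0" "c (-L)" x] dist_triangle[of "c 0" "c L" x] L
    by (simp_all add: dist_tree_line[OF c] dist_commute)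
  moreover have "dist x (c (-L)) = dist x w + L + s" "dist x (c L) = dist x w + L - s"
    using w(2,4) sL unfolding dist_between_def by (simp_all add: dist_commute)
  ultimately have "\<bar>s\<bar> \<le> dist x (c 0)" by linarith
  then show ?thesis using that w(2,4) s by blast
qed

end

context tree_action
begin

definition translates :: "(real \<Rightarrow> 'a) \<Rightarrow> 'g \<Rightarrow> real \<Rightarrow> bool" where
  "translates c k b \<longleftrightarrow> k \<in> carrier G \<and> (\<forall>s. \<phi> k (c s) = c (s + b))"

lemma translates_one: "tree_line c \<Longrightarrow> translates c \<one> 0"
  unfolding translates_def using act_one tree_line_in_T by simp

lemma translates_mult:
  "tree_line c \<Longrightarrow> translates c k1 b1 \<Longrightarrow> translates c k2 b2 \<Longrightarrow> translates c (k1 \<otimes> k2) (b1 + b2)"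
  unfolding translates_def using act_mult tree_line_in_T by (simp add: algebra_simps)

lemma translates_inv:
  assumes "tree_line c" "translates c k b"
  shows "translates c (inv k) (- b)"
proof -
  have "\<phi> (inv k) (c s) = c (s - b)" for s
    using act_inv_act[of k "c (s - b)"] assms tree_line_in_T unfolding translates_def by fastforce
  then show ?thesis using assms unfolding translates_def by simp
qed

lemma translates_pow:
  assumes "tree_line c" "translates c k b"
  shows "translates c (k [^] (n::nat)) (real n * b)"
proof (induction n)
  case 0
  then show ?case using translates_one[OF assms(1)] by simp
next
  case (Suc n)
  then show ?case
    using translates_mult[OF assms(1) Suc assms(2)] by (simp add: algebra_simps)
qed

lemma trans_len_translates:
  assumes c: "tree_line c" and t: "translates c k b"
  shows "trans_len T \<phi> k = \<bar>b\<bar>"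
proof (rule trans_len_eqI[OF tree_line_in_T[OF c, of 0]])
  show "dist (c 0) (\<phi> k (c 0)) = \<bar>b\<bar>" using t dist_tree_line[OF c] unfolding translates_def by simp
  have k: "k \<in> carrier G" using t unfolding translates_def by simp
  have "\<phi> (k [^] N) (c 0) = c (real N * b)" for N
    using translates_pow[OF c t, of N] unfolding translates_def by (metis add_0)
  then have escape: "real N * \<bar>b\<bar> \<le> dist (c 0) (\<phi> (k [^] N) (c 0))" for N
    by (simp add: dist_tree_line[OF c] abs_mult)
  show "\<bar>b\<bar> \<le> dist q (\<phi> k q)" if "q \<in> T" for q
    using displacement_ge_escape_rate[OF k that tree_line_in_T[OF c] escape] .
qed

text \<open>If c s is the projection of x to the line, the geodesic from x to k x runs through c s and
  c (s + t), so d(x, k x) = 2 d(x, c s) + t.\<close>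

lemma translates_small_displacement_in_range:
  assumes c: "tree_line c" and t: "translates c k t" "0 < t"
    and x: "x \<in> T" and small: "dist x (\<phi> k x) \<le> t"
  shows "x \<in> range c"
proof -
  have k: "k \<in> carrier G" and shift: "\<And>s. \<phi> k (c s) = c (s + t)" using t unfolding translates_def by auto
  define L where "L = dist x (c 0) + 2 * t"
  obtain s where s: "\<bar>s\<bar> \<le> dist x (c 0)" "dist_between x (c s) (c (-L))" "dist_between x (c s) (c L)"
    using tree_line_projection[OF c x, of L] t(2) unfolding L_def by auto
  have "- dist x (c 0) \<le> s" "s \<le> dist x (c 0)" using s(1) by (simp_all add: abs_le_iff)
  then have pos: "-L + t \<le> s" "s + t \<le> L" using t(2) unfolding L_def by linarith+
  have "dist_between (c s) (c (s + t)) (c L)" using tree_line_between[OF c _ pos(2)] t(2) by simp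
  then have xw: "dist_between x (c s) (c (s + t))" using dist_between_split(1)[OF s(3)] by blast
  have "dist_between (c (s + t)) (c s) (c (-L + t))"
    using dist_between_commute[OF tree_line_between[OF c pos(1)]] t(2) by simp
  then have "dist_between (\<phi> k x) (c (s + t)) (c s)"
    using dist_between_split(1)[OF dist_between_act[OF k x tree_line_in_T[OF c] tree_line_in_T[OF c] s(2)]]
    by (simp add: shift)
  moreover have "c s \<noteq> c (s + t)" using tree_line_eq_iff[OF c] t(2) by simp
  ultimately have "dist_between x (c (s + t)) (\<phi> k x)"
    using between_glue[OF x tree_line_in_T[OF c] tree_line_in_T[OF c] act_in_T[OF k x] xw]
      dist_between_commute by blast
  then have "dist x (\<phi> k x) = dist x (c s) + t + dist (c s) x"
    using xw act_dist[OF k tree_line_in_T[OF c] x, of s] t(2) shift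
    unfolding dist_between_def by (simp add: dist_tree_line[OF c])
  then have "dist x (c s) = 0" using small by (simp add: dist_commute)
  then show ?thesis by simp
qed

lemma char_set_translates:
  assumes c: "tree_line c" and t: "translates c k t" "0 < t"
  shows "char_set T \<phi> k = range c"
  unfolding char_set_def trans_len_translates[OF c t(1)]
  using translates_small_displacement_in_range[OF c t] t tree_line_in_T[OF c] dist_tree_line[OF c]
  by (auto simp: translates_def)

lemma hyperbolic_translates:
  assumes "tree_line c" "translates c k t" "t \<noteq> 0"
  shows "hyperbolic T \<phi> k"
  using trans_len_translates[OF assms(1,2)] trans_len_elliptic assms(3) unfolding hyperbolic_def by auto

end

text \<open>Construction of the axis of a hyperbolic element k from a point y with
  d(y, k(k y)) = 2 d(y, k y) > 0: the orbit points k^i y are aligned, and the line is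
  parametrised by the signed distance from y along the segments [k^-M y, k^M y].\<close>

locale aligned_orbit = tree_action +
  fixes k y and \<tau> :: real
  assumes k: "k \<in> carrier G" and y: "y \<in> T" and \<tau>: "0 < \<tau>"
    and dist_y: "dist y (\<phi> k y) = \<tau>" and aligned: "dist y (\<phi> k (\<phi> k y)) = 2 * \<tau>"
begin

definition orbit_pt :: "int \<Rightarrow> 'a" where
  "orbit_pt i = \<phi> (k [^] i) y"

lemma orbit_pt_in_T: "orbit_pt i \<in> T"
  unfolding orbit_pt_def using act_in_T k y by simp

lemma dist_orbit_pt: "dist (orbit_pt i) (orbit_pt j) = \<bar>of_int i - of_int j\<bar> * \<tau>"
proof -
  have "dist (orbit_pt i) (orbit_pt (i + int n)) = real n * \<tau>" for i n
  proof -
    have ki: "k [^] i \<in> carrier G" and kn: "k [^] n \<in> carrier G" using k by auto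
    have "orbit_pt (i + int n) = \<phi> (k [^] i) (\<phi> (k [^] n) y)"
      unfolding orbit_pt_def using int_pow_mult[OF k, of i "int n"] act_mult[OF ki kn y] k
      by (simp add: int_pow_int)
    then show ?thesis
      unfolding orbit_pt_def using act_dist[OF ki y act_in_T[OF kn y]]
        dist_pow_aligned[OF k y dist_y \<tau> aligned] by simp
  qed
  from this[of i "nat (j - i)"] this[of j "nat (i - j)"] show ?thesis
    by (cases "i \<le> j") (simp_all add: dist_commute)
qed

lemma dist_orbit_pt_le: "i \<le> j \<Longrightarrow> dist (orbit_pt i) (orbit_pt j) = (of_int j - of_int i) * \<tau>"
  using dist_orbit_pt[of i j] by simp

lemma act_orbit_pt: "\<phi> k (orbit_pt i) = orbit_pt (i + 1)"
proof -
  have "k [^] (i + 1) = k \<otimes> k [^] i"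
    using int_pow_mult[OF k, of 1 i] k by (simp add: add.commute)
  then show ?thesis unfolding orbit_pt_def using act_mult[of k "k [^] i" y] k y by simp
qed

definition at_position :: "nat \<Rightarrow> real \<Rightarrow> 'a \<Rightarrow> bool" where
  "at_position M s z \<longleftrightarrow> z \<in> T \<and> dist (orbit_pt (- int M)) z = s + real M * \<tau>
     \<and> dist z (orbit_pt (int M)) = real M * \<tau> - s"

lemma at_position_between: "at_position M s z \<Longrightarrow> dist_between (orbit_pt (- int M)) z (orbit_pt (int M))"
  unfolding at_position_def dist_between_def using dist_orbit_pt[of "- int M" "int M"] by simp

lemma at_position_mono:
  assumes P: "at_position M s z" and MK: "M \<le> K"
  shows "at_position K s z"
proof -
  have z: "dist_between (orbit_pt (- int M)) z (orbit_pt (int M))" using at_position_between[OF P] .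
  have d: "dist (orbit_pt (- int K)) (orbit_pt (- int M)) = (real K - real M) * \<tau>"
    "dist (orbit_pt (int K)) (orbit_pt (int M)) = (real K - real M) * \<tau>"
    "dist (orbit_pt (- int M)) (orbit_pt (int M)) = 2 * real M * \<tau>"
    "dist (orbit_pt (- int K)) (orbit_pt (int M)) = (real K + real M) * \<tau>"
    "dist (orbit_pt (int K)) (orbit_pt (- int M)) = (real K + real M) * \<tau>"
    using dist_orbit_pt_le[of "- int K" "- int M"] dist_orbit_pt_le[of "int M" "int K"]
      dist_orbit_pt_le[of "- int M" "int M"] dist_orbit_pt_le[of "- int K" "int M"]
      dist_orbit_pt_le[of "- int M" "int K"] MK
    by (simp_all add: dist_commute algebra_simps)
  then have "dist_between (orbit_pt (- int K)) (orbit_pt (- int M)) (orbit_pt (int M))"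
    "dist_between (orbit_pt (int K)) (orbit_pt (int M)) (orbit_pt (- int M))"
    unfolding dist_between_def by (simp_all add: dist_commute algebra_simps)
  from dist_between_split(1)[OF this(1) z] dist_between_split(1)[OF this(2) dist_between_commute[OF z]]
  show ?thesis using P d unfolding at_position_def dist_between_def
    by (simp add: algebra_simps dist_commute)
qed

lemma at_position_unique: "at_position M s z1 \<Longrightarrow> at_position M s z2 \<Longrightarrow> z1 = z2"
  using between_unique[OF orbit_pt_in_T orbit_pt_in_T _ _ at_position_between at_position_between]
  unfolding at_position_def by metis

lemma at_position_exists:
  assumes "\<bar>s\<bar> \<le> real M * \<tau>"
  obtains z where "at_position M s z"
proof -
  have len: "dist (orbit_pt (- int M)) (orbit_pt (int M)) = 2 * real M * \<tau>"
    using dist_orbit_pt \<tau> by simp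
  moreover have "- (real M * \<tau>) \<le> s" "s \<le> real M * \<tau>" using assms by (simp_all add: abs_le_iff)
  ultimately have "0 \<le> s + real M * \<tau>" "s + real M * \<tau> \<le> dist (orbit_pt (- int M)) (orbit_pt (int M))"
    by linarith+
  then obtain z where z: "z \<in> T" "dist_between (orbit_pt (- int M)) z (orbit_pt (int M))"
    "dist (orbit_pt (- int M)) z = s + real M * \<tau>"
    using between_at_dist[OF orbit_pt_in_T orbit_pt_in_T] by blast
  then have "dist z (orbit_pt (int M)) = real M * \<tau> - s" using len unfolding dist_between_def by linarith
  then have "at_position M s z" unfolding at_position_def using z by simp
  then show ?thesis using that by blast
qed

definition radius :: "real \<Rightarrow> nat" where
  "radius s = nat \<lceil>\<bar>s\<bar> / \<tau>\<rceil>"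

lemma abs_le_radius: "\<bar>s\<bar> \<le> real (radius s) * \<tau>"
proof -
  have "\<bar>s\<bar> / \<tau> \<le> real (radius s)" unfolding radius_def by linarith
  then show ?thesis using \<tau> by (simp add: divide_le_eq)
qed

definition axis :: "real \<Rightarrow> 'a" where
  "axis s = (SOME z. at_position (radius s) s z)"

lemma at_position_axis:
  assumes "\<bar>s\<bar> \<le> real M * \<tau>"
  shows "at_position M s (axis s)"
proof -
  have "at_position (radius s) s (axis s)"
    unfolding axis_def using at_position_exists[OF abs_le_radius] by (metis someI_ex)
  moreover obtain z where z: "at_position M s z" using at_position_exists[OF assms] .
  ultimately have "z = axis s"
    using at_position_unique at_position_mono[of _ _ _ "max M (radius s)"] by (metis max.cobounded1 max.cobounded2)
  then show ?thesis using z by simp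
qed

lemma tree_line_axis: "tree_line axis"
proof -
  have "dist (axis s) (axis t) = t - s" if "s \<le> t" for s t
  proof -
    define M where "M = max (radius s) (radius t)"
    have "\<bar>s\<bar> \<le> real M * \<tau>" "\<bar>t\<bar> \<le> real M * \<tau>"
      using abs_le_radius[of s] abs_le_radius[of t] \<tau> unfolding M_def
      by (smt (verit) mult_right_mono of_nat_le_iff max.cobounded1 max.cobounded2)+
    then have P: "at_position M s (axis s)" "at_position M t (axis t)" by (simp_all add: at_position_axis)
    then have "dist_between (orbit_pt (- int M)) (axis s) (axis t)"
      using between_ordered[OF orbit_pt_in_T orbit_pt_in_T _ _ at_position_between at_position_between]
        that unfolding at_position_def by simp
    then show ?thesis using P unfolding at_position_def dist_between_def by simp
  qed
  moreover have "axis s \<in> T" for s using at_position_axis[OF abs_le_radius] unfolding at_position_def by simp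
  ultimately show ?thesis
    unfolding tree_line_def by (metis abs_minus_commute abs_of_nonneg diff_ge_0_iff_ge dist_commute linear)
qed

lemma translates_axis: "translates axis k \<tau>"
proof -
  have "\<phi> k (axis s) = axis (s + \<tau>)" for s
  proof -
    define M where "M = radius s"
    have P: "at_position M s (axis s)" unfolding M_def using at_position_axis[OF abs_le_radius] .
    have axis_T: "axis s \<in> T" using P unfolding at_position_def by simp
    have left: "dist (orbit_pt (- int M + 1)) (\<phi> k (axis s)) = s + real M * \<tau>"
      using act_dist[OF k orbit_pt_in_T axis_T, of "- int M"] act_orbit_pt P unfolding at_position_def by simp
    have right: "dist (\<phi> k (axis s)) (orbit_pt (int (Suc M))) = real M * \<tau> - s"
      using act_dist[OF k axis_T orbit_pt_in_T, of "int M"] act_orbit_pt[of "int M"] P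
      unfolding at_position_def by (simp add: add.commute)
    have d: "dist (orbit_pt (- int (Suc M))) (orbit_pt (- int M + 1)) = 2 * \<tau>"
      "dist (orbit_pt (- int M + 1)) (orbit_pt (int (Suc M))) = 2 * real M * \<tau>"
      "dist (orbit_pt (- int (Suc M))) (orbit_pt (int (Suc M))) = 2 * real (Suc M) * \<tau>"
      using dist_orbit_pt_le[of "- int (Suc M)" "- int M + 1"] dist_orbit_pt_le[of "- int M + 1" "int (Suc M)"]
        dist_orbit_pt_le[of "- int (Suc M)" "int (Suc M)"] by (simp_all add: algebra_simps)
    then have "dist_between (orbit_pt (- int (Suc M))) (orbit_pt (- int M + 1)) (orbit_pt (int (Suc M)))"
      "dist_between (orbit_pt (- int M + 1)) (\<phi> k (axis s)) (orbit_pt (int (Suc M)))"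
      using left right unfolding dist_between_def by (simp_all add: algebra_simps)
    from dist_between_split(1)[OF this] left d(1)
    have "dist (orbit_pt (- int (Suc M))) (\<phi> k (axis s)) = (s + \<tau>) + real (Suc M) * \<tau>"
      unfolding dist_between_def by (simp add: algebra_simps)
    then have "at_position (Suc M) (s + \<tau>) (\<phi> k (axis s))"
      unfolding at_position_def using act_in_T[OF k axis_T] right by (simp add: algebra_simps)
    moreover have "\<bar>s + \<tau>\<bar> \<le> real (Suc M) * \<tau>"
      using abs_le_radius[of s] \<tau> unfolding M_def by (simp add: algebra_simps abs_le_iff)
    ultimately show ?thesis using at_position_axis at_position_unique by blast
  qed
  then show ?thesis unfolding translates_def using k by simp
qed

end

context tree_action
begin

lemma hyperbolic_axis:
  assumes k: "k \<in> carrier G" and hyp: "hyperbolic T \<phi> k"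
  obtains c \<tau> where "tree_line c" "0 < \<tau>" "translates c k \<tau>"
proof -
  obtain y where pt: "y \<in> T" "dist y (\<phi> k (\<phi> k y)) = 2 * dist y (\<phi> k y)" "0 < dist y (\<phi> k y)"
    using hyperbolic_aligned_point[OF k hyp] .
  interpret aligned_orbit T G \<phi> k y "dist y (\<phi> k y)"
    by unfold_locales (use k pt in simp_all)
  show ?thesis using that tree_line_axis translates_axis pt(3) by blast
qed

lemma hyperbolic_pow:
  assumes k: "k \<in> carrier G" and hyp: "hyperbolic T \<phi> k" and m: "0 < m"
  shows "hyperbolic T \<phi> (k [^] (m::nat))" "char_set T \<phi> (k [^] m) = char_set T \<phi> k"
    "trans_len T \<phi> (k [^] m) = real m * trans_len T \<phi> k"
proof -
  obtain c \<tau> where c: "tree_line c" "0 < \<tau>" "translates c k \<tau>" using hyperbolic_axis[OF k hyp] .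
  have cm: "translates c (k [^] m) (real m * \<tau>)" "0 < real m * \<tau>"
    using translates_pow[OF c(1,3)] c(2) m by simp_all
  show "hyperbolic T \<phi> (k [^] m)" by (rule hyperbolic_translates[OF c(1) cm(1)]) (use cm(2) in linarith)
  show "char_set T \<phi> (k [^] m) = char_set T \<phi> k"
    using char_set_translates[OF c(1) cm] char_set_translates[OF c(1) c(3,2)] by simp
  show "trans_len T \<phi> (k [^] m) = real m * trans_len T \<phi> k"
    using trans_len_translates[OF c(1) cm(1)] trans_len_translates[OF c(1) c(3)] c(2) by simp
qed

end

section \<open>Stabilisers of axes\<close>

lemma tree_length_gtE:
  assumes "ereal r < tree_length S" "0 \<le> r"
  obtains x y where "x \<in> S" "y \<in> S" "r < dist x y"
proof -
  have "S \<noteq> {}" using assms unfolding tree_length_def by (auto split: if_splits)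
  then show ?thesis using assms that unfolding tree_length_def by (auto simp: less_SUP_iff)
qed

lemma dist_le_tree_length:
  assumes "x \<in> S" "y \<in> S"
  shows "ereal (dist x y) \<le> tree_length S"
proof -
  have "ereal (dist x y) \<le> (SUP y\<in>S. ereal (dist x y))" using assms(2) by (rule SUP_upper)
  also have "\<dots> \<le> (SUP x\<in>S. SUP y\<in>S. ereal (dist x y))" using assms(1) by (rule SUP_upper)
  finally show ?thesis using assms unfolding tree_length_def by auto
qed

lemma real_isometry_cases:
  fixes f :: "real \<Rightarrow> real"
  assumes iso: "\<And>s t. \<bar>f s - f t\<bar> = \<bar>s - t\<bar>"
  shows "(\<forall>s. f s = f 0 + s) \<or> (\<forall>s. f s = f 0 - s)"
proof -
  have "f 1 = f 0 + 1 \<or> f 1 = f 0 - 1" using iso[of 1 0] by arith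
  moreover have "f s = f 0 + s" if "f 1 = f 0 + 1" for s
    using iso[of s 0] iso[of s 1] that by arith
  moreover have "f s = f 0 - s" if "f 1 = f 0 - 1" for s
    using iso[of s 0] iso[of s 1] that by arith
  ultimately show ?thesis by blast
qed

context tree_action
begin

lemma trans_len_nonneg: "0 \<le> trans_len T \<phi> k"
  by (rule trans_len_ge) simp

lemma abelian_on_generate_fixed_point:
  assumes g: "g \<in> carrier G" and h: "h \<in> carrier G" and z: "z \<in> T" "\<phi> g z = z" "\<phi> h z = z"
  shows "abelian_on G T \<phi> (generate G {g, h})"
proof -
  have S: "subgroup (stabilizer G \<phi> z) G" using group_action.stabilizer_subgroup[OF group_action z(1)] .
  have "generate G {g, h} \<subseteq> stabilizer G \<phi> z"
    by (rule generate_subgroup_incl[OF _ S]) (use g h z in \<open>auto simp: stabilizer_def\<close>)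
  moreover have fixed_len: "trans_len T \<phi> k = 0" if "k \<in> stabilizer G \<phi> z" for k
    using that z(1) unfolding stabilizer_def by (auto intro: trans_len_eqI)
  have "trans_len T \<phi> (a \<otimes> b) \<le> trans_len T \<phi> a + trans_len T \<phi> b"
    if "a \<in> stabilizer G \<phi> z" "b \<in> stabilizer G \<phi> z" for a b
    using fixed_len[OF subgroup.m_closed[OF S that]] fixed_len[OF that(1)] fixed_len[OF that(2)] by simp
  ultimately show ?thesis unfolding abelian_on_def by blast
qed

lemma abelian_on_generate_translates:
  assumes c: "tree_line c" and "translates c g a" "translates c h b"
  shows "abelian_on G T \<phi> (generate G {g, h})"
proof -
  define S where "S = {k. \<exists>b. translates c k b}"
  have "subgroup S G"
  proof (rule subgroupI)
    show "S \<subseteq> carrier G" "S \<noteq> {}" using translates_one[OF c] unfolding S_def translates_def by blast+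
    show "inv k \<in> S" if "k \<in> S" for k using that translates_inv[OF c] unfolding S_def by blast
    show "k1 \<otimes> k2 \<in> S" if "k1 \<in> S" "k2 \<in> S" for k1 k2
      using that translates_mult[OF c] unfolding S_def by blast
  qed
  then have "generate G {g, h} \<subseteq> S"
    by (rule generate_subgroup_incl[rotated]) (use assms in \<open>auto simp: S_def\<close>)
  moreover have "trans_len T \<phi> (k1 \<otimes> k2) \<le> trans_len T \<phi> k1 + trans_len T \<phi> k2"
    if "translates c k1 b1" "translates c k2 b2" for k1 k2 b1 b2
    using trans_len_translates[OF c] translates_mult[OF c that] that abs_triangle_ineq by metis
  ultimately show ?thesis unfolding abelian_on_def S_def by blast
qed

lemma translates_or_reflects:
  assumes c: "tree_line c" and k: "k \<in> carrier G" and stab: "\<phi> k ` range c = range c"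
  obtains b where "translates c k b" | b where "\<forall>s. \<phi> k (c s) = c (b - s)"
proof -
  have "\<exists>t. \<phi> k (c s) = c t" for s using stab by (metis image_eqI rangeE rangeI)
  then obtain u where u: "\<And>s. \<phi> k (c s) = c (u s)" by metis
  have "\<bar>u s - u t\<bar> = \<bar>s - t\<bar>" for s t
    using act_dist[OF k tree_line_in_T[OF c] tree_line_in_T[OF c], of s t] u dist_tree_line[OF c] by simp
  then have "(\<forall>s. u s = u 0 + s) \<or> (\<forall>s. u s = u 0 - s)" by (rule real_isometry_cases)
  then show ?thesis using that k u unfolding translates_def by (metis add.commute)
qed

lemma hyperbolic_stabilizer_translates:
  assumes c: "tree_line c" and k: "k \<in> carrier G" and hyp: "hyperbolic T \<phi> k"
    and stab: "\<phi> k ` range c = range c"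
  obtains b where "translates c k b"
proof (rule translates_or_reflects[OF c k stab])
  fix b assume "\<forall>s. \<phi> k (c s) = c (b - s)"
  then have "\<phi> k (c (b / 2)) = c (b / 2)" by simp
  then show thesis using hyp tree_line_in_T[OF c] unfolding hyperbolic_def elliptic_def by blast
qed

lemma stabilizer_fixing_two_points_translates:
  assumes c: "tree_line c" and k: "k \<in> carrier G" and stab: "\<phi> k ` range c = range c"
    and fixed: "\<phi> k (c a) = c a" "\<phi> k (c a') = c a'" and "a \<noteq> a'"
  shows "translates c k 0"
proof (rule translates_or_reflects[OF c k stab])
  fix b assume "translates c k b"
  moreover from this have "b = 0" using fixed(1) tree_line_eq_iff[OF c] unfolding translates_def by force
  ultimately show ?thesis by simp
next
  fix b assume "\<forall>s. \<phi> k (c s) = c (b - s)"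
  then have "b - a = a" "b - a' = a'" using fixed tree_line_eq_iff[OF c] by auto
  then show ?thesis using \<open>a \<noteq> a'\<close> by simp
qed

lemma weakly_stable_stabilizes_axis:
  assumes ws: "weakly_stable G T \<phi> lam h" and c: "tree_line c" and h: "translates c h \<tau>" "0 < \<tau>"
    and k: "k \<in> carrier G" and p: "p \<in> range c" "p \<in> \<phi> k ` range c"
    and q: "q \<in> range c" "q \<in> \<phi> k ` range c" and far: "lam * \<tau> < dist p q"
  shows "\<phi> k ` range c = range c"
proof -
  have A: "char_set T \<phi> h = range c" "trans_len T \<phi> h = \<tau>"
    using char_set_translates[OF c h] trans_len_translates[OF c h(1)] h(2) by simp_all
  have "ereal (lam * \<tau>) < ereal (dist p q)" using far by (simp only: less_ereal.simps)
  also have "\<dots> \<le> tree_length (range c \<inter> \<phi> k ` range c)"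
    by (rule dist_le_tree_length[OF IntI[OF p] IntI[OF q]])
  finally have "ereal (lam * trans_len T \<phi> h) < tree_length (char_set T \<phi> h \<inter> \<phi> k ` char_set T \<phi> h)"
    unfolding A .
  then have "k \<in> stab_axis G T \<phi> h" using ws k unfolding weakly_stable_def by blast
  then show ?thesis unfolding stab_axis_def A by blast
qed

lemma weakly_stable_pow:
  assumes h: "h \<in> carrier G" and ws: "weakly_stable G T \<phi> lam h" and m: "3 * lam \<le> real m" "0 < m"
  shows "weakly_stable G T \<phi> (1/3) (h [^] m)"
proof -
  have hyp: "hyperbolic T \<phi> h" using ws unfolding weakly_stable_def by simp
  note pow = hyperbolic_pow[OF h hyp m(2)]
  have "3 * lam * trans_len T \<phi> h \<le> real m * trans_len T \<phi> h"
    using mult_right_mono[OF m(1) trans_len_nonneg] .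
  then have le: "lam * trans_len T \<phi> h \<le> 1/3 * trans_len T \<phi> (h [^] m)"
    unfolding pow(3) by linarith
  show ?thesis unfolding weakly_stable_def
  proof (intro conjI ballI impI)
    show "hyperbolic T \<phi> (h [^] m)" by (rule pow(1))
    fix k assume k: "k \<in> carrier G" and long: "ereal (1/3 * trans_len T \<phi> (h [^] m))
      < tree_length (char_set T \<phi> (h [^] m) \<inter> \<phi> k ` char_set T \<phi> (h [^] m))"
    have "ereal (lam * trans_len T \<phi> h) < tree_length (char_set T \<phi> h \<inter> \<phi> k ` char_set T \<phi> h)"
      using le long unfolding pow(2) by (meson ereal_less_eq(3) order_le_less_trans)
    then show "k \<in> stab_axis G T \<phi> (h [^] m)"
      using ws k unfolding weakly_stable_def stab_axis_def pow(2) by blast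
  qed
qed

end

section \<open>Overlaps of characteristic sets\<close>

context R_tree
begin

lemma tree_line_overlap_interval:
  assumes c: "tree_line c" and p: "p \<in> S" "p \<in> range c" and q: "q \<in> S" "q \<in> range c"
    and far: "r < dist p q"
  obtains a b where "c a \<in> S" "c b \<in> S" "r < b - a"
proof -
  obtain a1 a2 where a: "p = c a1" "q = c a2" using p(2) q(2) by blast
  show ?thesis
  proof (cases "a1 \<le> a2")
    case True
    then show ?thesis using that[of a1 a2] a p q far dist_tree_line[OF c] by simp
  next
    case False
    then show ?thesis using that[of a2 a1] a p q far dist_tree_line[OF c] by simp
  qed
qed

end

context tree_action
begin

lemma translates_overlap_in_image:
  assumes c': "tree_line c'" and c: "tree_line c" and k: "translates c k \<tau>" "0 \<le> \<tau>"
    and ab: "c a \<in> range c'" "c b \<in> range c'" "\<tau> \<le> b - a"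
  shows "c (a + \<tau>) \<in> range c' \<inter> \<phi> k ` range c'" "c b \<in> range c' \<inter> \<phi> k ` range c'"
proof -
  obtain a' b' where ends: "c a = c' a'" "c b = c' b'" using ab(1,2) by blast
  have "dist_between (c a) (c (a + \<tau>)) (c b)" "dist_between (c a) (c (b - \<tau>)) (c b)"
    using tree_line_between[OF c] k(2) ab(3) by simp_all
  then have in_range: "c (a + \<tau>) \<in> range c'" "c (b - \<tau>) \<in> range c'"
    using between_tree_line_in_range[OF c' tree_line_in_T[OF c]] ends by simp_all
  have "c (a + \<tau>) = \<phi> k (c a)" "c b = \<phi> k (c (b - \<tau>))" using k(1) unfolding translates_def by simp_all
  then show "c (a + \<tau>) \<in> range c' \<inter> \<phi> k ` range c'" "c b \<in> range c' \<inter> \<phi> k ` range c'"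
    using in_range ab(1,2) by auto
qed

definition stable_power :: "real \<Rightarrow> 'g \<Rightarrow> bool" where
  "stable_power lam g \<longleftrightarrow> (\<exists>g0\<in>carrier G. \<exists>m::int. weakly_stable G T \<phi> lam g0 \<and>
     real_of_int m \<ge> 10 * max lam 1 \<and> g = g0 [^] m)"

lemma stable_powerE:
  assumes "stable_power lam g"
  obtains g0 m where "g0 \<in> carrier G" "weakly_stable G T \<phi> lam g0" "10 * max lam 1 \<le> real m"
    "g = g0 [^] (m::nat)"
proof -
  obtain g0 and m :: int where g0: "g0 \<in> carrier G" "weakly_stable G T \<phi> lam g0"
    and m: "real_of_int m \<ge> 10 * max lam 1" and g: "g = g0 [^] m"
    using assms unfolding stable_power_def by blast
  have "0 \<le> m" using m max.cobounded2[of 1 lam] by linarith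
  then have "g = g0 [^] nat m" "10 * max lam 1 \<le> real (nat m)"
    using g m int_pow_int[where x = g0 and n = "nat m"] by simp_all
  then show ?thesis using that g0 by blast
qed

lemma stable_power_weakly_stable:
  assumes "stable_power lam g"
  shows "weakly_stable G T \<phi> (1/3) g"
proof -
  obtain g0 m where g0: "g0 \<in> carrier G" "weakly_stable G T \<phi> lam g0"
    and m: "10 * max lam 1 \<le> real m" and g: "g = g0 [^] m"
    using stable_powerE[OF assms] .
  have "3 * lam \<le> real m" "0 < real m" using m max.cobounded1[of lam 1] max.cobounded2[of 1 lam] by linarith+
  then show ?thesis using weakly_stable_pow[OF g0] g by simp
qed

lemma char_set_overlap_elliptic:
  assumes g: "g \<in> carrier G" "elliptic T \<phi> g" and h: "h \<in> carrier G" "elliptic T \<phi> h"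
    and irr: "irreducible_on G T \<phi> (generate G {g, h})"
  shows "tree_length (char_set T \<phi> g \<inter> char_set T \<phi> h)
    \<le> ereal (max (trans_len T \<phi> g) (trans_len T \<phi> h) / 2)"
proof -
  have "char_set T \<phi> g \<inter> char_set T \<phi> h = {}"
    using abelian_on_generate_fixed_point[OF g(1) h(1)] irr
    unfolding char_set_elliptic[OF g(2)] char_set_elliptic[OF h(2)] irreducible_on_def by blast
  then show ?thesis using trans_len_elliptic g(2) h(2) by (simp add: tree_length_def)
qed

lemma stable_power_axisE:
  assumes "stable_power lam g"
  obtains g0 m c \<tau> where "g0 \<in> carrier G" "weakly_stable G T \<phi> lam g0" "g = g0 [^] (m::nat)"
    "tree_line c" "0 < \<tau>" "translates c g0 \<tau>" "translates c g (trans_len T \<phi> g)"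
    "char_set T \<phi> g = range c" "10 * \<tau> \<le> trans_len T \<phi> g" "10 * lam * \<tau> \<le> trans_len T \<phi> g"
proof -
  obtain g0 m where g0: "g0 \<in> carrier G" "weakly_stable G T \<phi> lam g0"
    and m: "10 * max lam 1 \<le> real m" and g: "g = g0 [^] m"
    using stable_powerE[OF assms] .
  obtain c \<tau> where c: "tree_line c" "0 < \<tau>" "translates c g0 \<tau>"
    using hyperbolic_axis[OF g0(1)] g0(2) unfolding weakly_stable_def by blast
  have "10 \<le> real m" "10 * lam \<le> real m" using m max.cobounded1[of lam 1] max.cobounded2[of 1 lam] by linarith+
  then have "10 * \<tau> \<le> real m * \<tau>" "10 * lam * \<tau> \<le> real m * \<tau>" using c(2) by (simp_all add: mult_right_mono)
  moreover have "translates c g (real m * \<tau>)" "0 < real m * \<tau>"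
    using translates_pow[OF c(1,3)] c(2) \<open>10 \<le> real m\<close> unfolding g by simp_all
  moreover note char_set_translates[OF c(1) this] trans_len_translates[OF c(1) this(1)]
  ultimately show ?thesis using that g0 g c by simp
qed

lemma char_set_overlap_elliptic_stable_power:
  assumes g: "g \<in> carrier G" "elliptic T \<phi> g" and h: "stable_power lam h"
    and irr: "irreducible_on G T \<phi> (generate G {g, h})"
  shows "tree_length (char_set T \<phi> g \<inter> char_set T \<phi> h)
    \<le> ereal (max (trans_len T \<phi> g) (trans_len T \<phi> h) / 2)"
proof (rule ccontr)
  obtain h0 n c \<tau> where h0: "h0 \<in> carrier G" "weakly_stable G T \<phi> lam h0"
    and c: "tree_line c" "0 < \<tau>" "translates c h0 \<tau>" "translates c h (trans_len T \<phi> h)"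
    and A: "char_set T \<phi> h = range c" "10 * \<tau> \<le> trans_len T \<phi> h" "10 * lam * \<tau> \<le> trans_len T \<phi> h"
    using stable_power_axisE[OF h] .
  have max: "max (trans_len T \<phi> g) (trans_len T \<phi> h) = trans_len T \<phi> h"
    using trans_len_elliptic[OF g(2)] trans_len_nonneg[of h] by simp
  assume "\<not> ?thesis"
  then have "ereal (trans_len T \<phi> h / 2) < tree_length (char_set T \<phi> g \<inter> range c)"
    unfolding max A(1) by simp
  moreover have "0 \<le> trans_len T \<phi> h / 2" using trans_len_nonneg[of h] by simp
  ultimately obtain p q where pq: "p \<in> char_set T \<phi> g \<inter> range c" "q \<in> char_set T \<phi> g \<inter> range c"
    and far: "trans_len T \<phi> h / 2 < dist p q"
    by (rule tree_length_gtE)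
  then have p: "p \<in> char_set T \<phi> g" "p \<in> range c" and q: "q \<in> char_set T \<phi> g" "q \<in> range c" by simp_all
  obtain a a' where a: "p = c a" "q = c a'" using p(2) q(2) by blast
  have fixed: "\<phi> g p = p" "\<phi> g q = q" using p(1) q(1) unfolding char_set_elliptic[OF g(2)] by simp_all
  text \<open>g fixes two points of the axis far apart, so it stabilises the axis and fixes it pointwise.\<close>
  have "p \<in> \<phi> g ` range c" "q \<in> \<phi> g ` range c" using p(2) q(2) fixed by force+
  moreover have "lam * \<tau> < dist p q" using far A(2,3) c(2) by linarith
  ultimately have "\<phi> g ` range c = range c"
    using weakly_stable_stabilizes_axis[OF h0(2) c(1) c(3) c(2) g(1) p(2) _ q(2)] by simp
  moreover have "a \<noteq> a'" using far A(2) c(2) a by auto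
  ultimately have "translates c g 0"
    using stabilizer_fixing_two_points_translates[OF c(1) g(1)] fixed a by simp
  then have "abelian_on G T \<phi> (generate G {g, h})" using abelian_on_generate_translates[OF c(1) _ c(4)] by blast
  then show False using irr unfolding irreducible_on_def by simp
qed

lemma char_set_overlap_stable_powers:
  assumes g: "stable_power lam g" and h: "stable_power lam h"
    and le: "trans_len T \<phi> h \<le> trans_len T \<phi> g"
    and irr: "irreducible_on G T \<phi> (generate G {g, h})"
  shows "tree_length (char_set T \<phi> g \<inter> char_set T \<phi> h)
    \<le> ereal (max (trans_len T \<phi> g) (trans_len T \<phi> h) / 2)"
proof (rule ccontr)
  obtain g0 m cg \<tau>g where g0: "g0 \<in> carrier G" "weakly_stable G T \<phi> lam g0"
    and cg: "tree_line cg" "0 < \<tau>g" "translates cg g0 \<tau>g" "translates cg g (trans_len T \<phi> g)"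
    and Ag: "char_set T \<phi> g = range cg" "10 * lam * \<tau>g \<le> trans_len T \<phi> g"
    using stable_power_axisE[OF g] by metis
  obtain h0 n ch \<tau>h where h0: "h0 \<in> carrier G" "weakly_stable G T \<phi> lam h0" and hn: "h = h0 [^] (n::nat)"
    and ch: "tree_line ch" "0 < \<tau>h" "translates ch h0 \<tau>h"
    and Ah: "char_set T \<phi> h = range ch" "10 * \<tau>h \<le> trans_len T \<phi> h"
    using stable_power_axisE[OF h] by metis
  have hyp: "hyperbolic T \<phi> h0" using h0(2) unfolding weakly_stable_def by simp
  assume "\<not> ?thesis"
  then have "ereal (trans_len T \<phi> g / 2) < tree_length (range cg \<inter> range ch)"
    using le unfolding Ag(1) Ah(1) by simp
  moreover have "0 \<le> trans_len T \<phi> g / 2" using trans_len_nonneg[of g] by simp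
  ultimately obtain p q where "p \<in> range cg \<inter> range ch" "q \<in> range cg \<inter> range ch"
    "trans_len T \<phi> g / 2 < dist p q"
    by (rule tree_length_gtE)
  then obtain a b where ab: "ch a \<in> range cg" "ch b \<in> range cg" "trans_len T \<phi> g / 2 < b - a"
    using tree_line_overlap_interval[OF ch(1), of p "range cg" q] by blast
  text \<open>Shifting by h0 keeps a segment of length b - a - \<tau>h of the axis of h inside the axis of g,
    which is longer than lam \<tau>g, so h0 stabilises the axis of g.\<close>
  have "\<tau>h \<le> b - a" using ab(3) Ah(2) le ch(2) by linarith
  note overlap = translates_overlap_in_image[OF cg(1) ch(1) ch(3) less_imp_le[OF ch(2)] ab(1,2) this]
  have "lam * \<tau>g < dist (ch (a + \<tau>h)) (ch b)"
    using ab(3) Ag(2) Ah(2) le dist_tree_line[OF ch(1)] ch(2) trans_len_nonneg[of g] by simp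
  then have "\<phi> h0 ` range cg = range cg"
    using weakly_stable_stabilizes_axis[OF g0(2) cg(1) cg(3) cg(2) h0(1)] overlap by blast
  then obtain b0 where "translates cg h0 b0"
    using hyperbolic_stabilizer_translates[OF cg(1) h0(1) hyp] by blast
  then have "abelian_on G T \<phi> (generate G {g, h})"
    using abelian_on_generate_translates[OF cg(1) cg(4)] translates_pow[OF cg(1)] unfolding hn by blast
  then show False using irr unfolding irreducible_on_def by simp
qed

lemma char_set_overlap_le:
  assumes g: "g \<in> carrier G" "elliptic T \<phi> g \<or> stable_power lam g"
    and h: "h \<in> carrier G" "elliptic T \<phi> h \<or> stable_power lam h"
    and irr: "irreducible_on G T \<phi> (generate G {g, h})"
  shows "tree_length (char_set T \<phi> g \<inter> char_set T \<phi> h)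
    \<le> ereal (max (trans_len T \<phi> g) (trans_len T \<phi> h) / 2)"
proof -
  have irr': "irreducible_on G T \<phi> (generate G {h, g})" using irr by (simp add: insert_commute)
  have swap: "tree_length (char_set T \<phi> h \<inter> char_set T \<phi> g)
      \<le> ereal (max (trans_len T \<phi> h) (trans_len T \<phi> g) / 2) \<Longrightarrow> ?thesis"
    by (simp add: Int_commute max.commute)
  show ?thesis
    using g(2) h(2)
  proof (elim disjE)
    assume "elliptic T \<phi> g" "elliptic T \<phi> h"
    then show ?thesis using char_set_overlap_elliptic g(1) h(1) irr by blast
  next
    assume "elliptic T \<phi> g" "stable_power lam h"
    then show ?thesis using char_set_overlap_elliptic_stable_power g(1) irr by blast
  next
    assume "stable_power lam g" "elliptic T \<phi> h"
    then show ?thesis using char_set_overlap_elliptic_stable_power h(1) irr' swap by blast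
  next
    assume "stable_power lam g" "stable_power lam h"
    then show ?thesis
      using char_set_overlap_stable_powers irr irr' swap le_cases[of "trans_len T \<phi> g" "trans_len T \<phi> h"]
      by metis
  qed
qed

end

theorem mainTheorem11:
  fixes G :: "('g, 'm) monoid_scheme" and T :: "'a::metric_space set"
    and \<phi> :: "'g \<Rightarrow> 'a \<Rightarrow> 'a" and g h :: 'g and lam :: real
  assumes "real_tree T"
    and "isometric_action G T \<phi>"
    and "g \<in> carrier G" and "h \<in> carrier G"
    and "irreducible_on G T \<phi> (generate G {g, h})"
    and "lam > 0"
    and "elliptic T \<phi> g \<or> (\<exists>g0\<in>carrier G. \<exists>m::int. weakly_stable G T \<phi> lam g0 \<and>
            real_of_int m \<ge> 10 * max lam 1 \<and> g = g0 [^]\<^bsub>G\<^esub> m)"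
    and "elliptic T \<phi> h \<or> (\<exists>h0\<in>carrier G. \<exists>m::int. weakly_stable G T \<phi> lam h0 \<and>
            real_of_int m \<ge> 10 * max lam 1 \<and> h = h0 [^]\<^bsub>G\<^esub> m)"
  shows "acylindrical_pair G T \<phi> g h"
proof -
  interpret tree_action T G \<phi>
    using assms(1,2) by (simp add: tree_action_def tree_action_axioms_def R_tree_def)
  have types: "elliptic T \<phi> g \<or> stable_power lam g" "elliptic T \<phi> h \<or> stable_power lam h"
    using assms(7,8) unfolding stable_power_def .
  have "hyperbolic T \<phi> k \<longrightarrow> weakly_stable G T \<phi> (1/3) k" if "elliptic T \<phi> k \<or> stable_power lam k" for k
    using that stable_power_weakly_stable unfolding hyperbolic_def by blast
  then show ?thesis
    unfolding acylindrical_pair_def using char_set_overlap_le[OF assms(3) types(1) assms(4) types(2) assms(5)]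
      assms(5) types by blast
qed

end
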